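(* Let $H$ be a real symmetric positive definite $d\times d$ matrix and $L$ a real $d\times d$ matrix with $L^TH+HL=0$. Consider an $s$-stage explicit Runge–Kutta method ($s\ge 4$) applied to $\frac{d}{dt}u=Lu$, i.e. $u_{n+1}=G_s u_n$ with $G_s=\sum_{k=0}^s a_k (hL)^k$, $a_0=1$, $a_s\neq0$, $h>0$, and suppose the method is of fourth order, i.e. $a_k=1/k!$ for $k=1,2,3,4$. Suppose that $b_k=0$ for all $3\le k\le s-2$ and that $b_{s-1}=a_{s-1}^2-2a_sa_{s-2}<0$. Then the order of energy accuracy is $r=2s-3$. Furthermore, the method is strongly stable (i.e. $\|u_{n+1}\|_H\le\|u_n\|_H$ for every $u_n$) provided $$h\|L\|\le \lambda=\sqrt{\frac{2a_sa_{s-2}-a_{s-1}^2}{a_s^2}}.$$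
   Context: For $0\le k\le s$, $b_k=\sum_{i=\max(0,2k-s)}^{\min(2k,s)}(-1)^{k+i}a_i a_{2k-i}$. With energy $\mathcal{E}=\tfrac12\|u\|_H^2=\tfrac12\langle u,Hu\rangle$, one has $\mathcal{E}_{n+1}=\mathcal{E}_n+\tfrac12\sum_{k=1}^s b_k h^{2k}\|L^k u_n\|_H^2$. The leading index $m$ is the smallest $k\ge1$ with $b_k\ne0$ and the order of energy accuracy is $r=2m-1$. Here $\|\cdot\|_H$ is the norm $\|x\|_H=\sqrt{\langle x,Hx\rangle}$ and $\|L\|=\sup_{\|v\|_H=1}\|Lv\|_H$. *)

theory Defs
  imports "HOL-Analysis.Analysis"
begin

text \<open>Real d x d matrices are modelled as real^'n^'n with 'n a finite index type (d = CARD('n)).\<close>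

definition sym_pos_def :: "real^'n^'n \<Rightarrow> bool" where
  "sym_pos_def H \<longleftrightarrow> transpose H = H \<and> (\<forall>x. x \<noteq> 0 \<longrightarrow> x \<bullet> (H *v x) > 0)"

definition Hnorm :: "real^'n^'n \<Rightarrow> real^'n \<Rightarrow> real" where
  "Hnorm H x = sqrt (x \<bullet> (H *v x))"

definition Hopnorm :: "real^'n^'n \<Rightarrow> real^'n^'n \<Rightarrow> real" where
  "Hopnorm H L = Sup {Hnorm H (L *v v) | v. Hnorm H v = 1}"

primrec matpow :: "real^'n^'n \<Rightarrow> nat \<Rightarrow> real^'n^'n" where
  "matpow A 0 = mat 1"
| "matpow A (Suc k) = A ** matpow A k"

definition RK_matrix :: "(nat \<Rightarrow> real) \<Rightarrow> nat \<Rightarrow> real \<Rightarrow> real^'n^'n \<Rightarrow> real^'n^'n" where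
  "RK_matrix a s h L = (\<Sum>k=0..s. (a k * h ^ k) *\<^sub>R matpow L k)"

definition bcoef :: "(nat \<Rightarrow> real) \<Rightarrow> nat \<Rightarrow> nat \<Rightarrow> real" where
  "bcoef a s k = (\<Sum>i = max 0 (2*k - s) .. min (2*k) s. (-1) ^ (k + i) * a i * a (2*k - i))"

definition leading_index :: "(nat \<Rightarrow> real) \<Rightarrow> nat \<Rightarrow> nat" where
  "leading_index a s = (LEAST k. 1 \<le> k \<and> bcoef a s k \<noteq> 0)"

definition energy_order :: "(nat \<Rightarrow> real) \<Rightarrow> nat \<Rightarrow> nat" where
  "energy_order a s = 2 * leading_index a s - 1"

end

theory Submission
  imports Defs
begin

text \<open>Skew-adjointness of L for the form <x, H y> gives <L^i u, H L^j u> = (-1)^i <u, H L^(i+j) u>,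
  which vanishes for odd i + j and equals (-1)^(k+i) |L^k u|_H^2 for i + j = 2k. Expanding
  |G_s u|_H^2 and collecting antidiagonals therefore yields sum_k b_k h^(2k) |L^k u|_H^2.
  Fourth order forces b_1 = b_2 = 0, so under the hypotheses only b_0 = 1, b_(s-1) < 0 and
  b_s = a_s^2 survive. Hence the leading index is s - 1, and
  |G_s u|_H^2 - |u|_H^2 = h^(2s-2) (b_(s-1) |L^(s-1) u|_H^2 + a_s^2 h^2 |L^s u|_H^2),
  which is non-positive as soon as h |L| <= lambda, because a_s^2 lambda^2 = -b_(s-1).\<close>

section \<open>Skew-adjointness with respect to H\<close>

lemma inner_mat_sym:
  fixes H :: "real^'n^'n"
  assumes "transpose H = H"
  shows "x \<bullet> (H *v y) = y \<bullet> (H *v x)"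
  by (metis assms dot_lmul_matrix inner_commute transpose_transpose vector_transpose_matrix)

lemma inner_skew_adjoint:
  fixes H L :: "real^'n^'n"
  assumes "transpose L ** H + H ** L = 0"
  shows "(L *v x) \<bullet> (H *v y) = - (x \<bullet> (H *v (L *v y)))"
proof -
  have "transpose L *v (H *v y) + H *v (L *v y) = 0"
    using arg_cong[OF assms, of "\<lambda>M. M *v y"]
    by (simp add: matrix_vector_mult_add_rdistrib matrix_vector_mul_assoc)
  then have "transpose L *v (H *v y) = - (H *v (L *v y))"
    by (simp add: eq_neg_iff_add_eq_0)
  moreover have "(L *v x) \<bullet> (H *v y) = x \<bullet> (transpose L *v (H *v y))"
    by (metis dot_lmul_matrix vector_transpose_matrix)
  ultimately show ?thesis
    by simp
qed

lemma matpow_add: "matpow A (i + j) = matpow A i ** matpow A j"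
  by (induction i) (simp_all add: matrix_mul_assoc)

lemma matpow_Suc_right: "matpow A (Suc k) = matpow A k ** A"
  using matpow_add[of A k 1] by simp

lemma inner_matpow_skew_adjoint:
  fixes H L :: "real^'n^'n"
  assumes "transpose L ** H + H ** L = 0"
  shows "(matpow L i *v x) \<bullet> (H *v y) = (-1) ^ i * (x \<bullet> (H *v (matpow L i *v y)))"
proof (induction i arbitrary: y)
  case 0
  then show ?case by simp
next
  case (Suc i)
  have "(matpow L (Suc i) *v x) \<bullet> (H *v y) = - ((matpow L i *v x) \<bullet> (H *v (L *v y)))"
    by (simp add: inner_skew_adjoint[OF assms] flip: matrix_vector_mul_assoc)
  also have "\<dots> = (-1) ^ Suc i * (x \<bullet> (H *v (matpow L (Suc i) *v y)))"
    using Suc[of "L *v y"]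
    by (simp add: matpow_Suc_right matrix_vector_mul_assoc del: matpow.simps)
  finally show ?case .
qed

lemma inner_matpow_odd_eq_0:
  fixes H L :: "real^'n^'n"
  assumes "transpose L ** H + H ** L = 0" "transpose H = H" "odd m"
  shows "u \<bullet> (H *v (matpow L m *v u)) = 0"
  using inner_matpow_skew_adjoint[OF assms(1), of m u u] inner_mat_sym[OF assms(2), of u]
    assms(3) by simp

lemma inner_matpow_even:
  fixes H L :: "real^'n^'n"
  assumes "transpose L ** H + H ** L = 0"
  shows "u \<bullet> (H *v (matpow L (2 * k) *v u))
    = (-1) ^ k * ((matpow L k *v u) \<bullet> (H *v (matpow L k *v u)))"
proof -
  have "((-1::real) ^ k) * (-1) ^ k = 1"
    by (simp flip: power_add)
  then show ?thesis
    using inner_matpow_skew_adjoint[OF assms, of k u "matpow L k *v u"]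
    by (simp add: mult_2 matpow_add matrix_vector_mul_assoc)
qed

section \<open>The energy identity\<close>

lemma sum_matrix_vector_mult:
  "finite A \<Longrightarrow> (\<Sum>k\<in>A. f k) *v u = (\<Sum>k\<in>A. (f k :: real^'n^'m) *v u)"
  by (induction A rule: finite_induct) (auto simp: matrix_vector_mult_add_rdistrib)

lemma RK_matrix_mult_vec:
  "RK_matrix a s h L *v u = (\<Sum>k\<le>s. (a k * h ^ k) *\<^sub>R (matpow L k *v u))"
  unfolding RK_matrix_def
  by (simp add: sum_matrix_vector_mult scaleR_matrix_vector_assoc atLeast0AtMost)

lemma bcoef_eq_sum_atMost:
  "bcoef a s k = (\<Sum>i\<le>2 * k. (-1) ^ (k + i)
     * (if i \<le> s then a i else 0) * (if 2 * k - i \<le> s then a (2 * k - i) else 0))"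
  unfolding bcoef_def by (rule sum.mono_neutral_cong_left) auto

lemma sum_square_eq_sum_antidiagonals:
  fixes F :: "nat \<Rightarrow> nat \<Rightarrow> 'a::comm_monoid_add"
  assumes "\<And>i j. s < i \<or> s < j \<Longrightarrow> F i j = 0"
  shows "(\<Sum>i\<le>s. \<Sum>j\<le>s. F i j) = (\<Sum>m<2 * Suc s. \<Sum>i\<le>m. F i (m - i))"
proof -
  have "(\<Sum>i\<le>s. \<Sum>j\<le>s. F i j) = (\<Sum>(i, j)\<in>{..s} \<times> {..s}. F i j)"
    by (simp add: sum.cartesian_product)
  also have "\<dots> = (\<Sum>(i, j)\<in>{(i, j). i + j < 2 * Suc s}. F i j)"
  proof (rule sum.mono_neutral_left)
    show "finite {(i, j). i + j < 2 * Suc s}"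
      by (rule finite_subset[of _ "{..<2 * Suc s} \<times> {..<2 * Suc s}"]) auto
  qed (use assms in \<open>auto intro: ccontr\<close>)
  also have "\<dots> = (\<Sum>m<2 * Suc s. \<Sum>i\<le>m. F i (m - i))"
    by (rule sum.triangle_reindex)
  finally show ?thesis .
qed

theorem RK_energy_identity:
  fixes H L :: "real^'n^'n"
  assumes skew: "transpose L ** H + H ** L = 0" and Hsym: "transpose H = H"
  shows "(RK_matrix a s h L *v u) \<bullet> (H *v (RK_matrix a s h L *v u)) =
    (\<Sum>k\<le>s. bcoef a s k * h ^ (2 * k) * ((matpow L k *v u) \<bullet> (H *v (matpow L k *v u))))"
proof -
  define c where "c i = (if i \<le> s then a i * h ^ i else 0)" for i
  define e where "e m = u \<bullet> (H *v (matpow L m *v u))" for m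
  define d where "d m = (\<Sum>i\<le>m. (-1) ^ i * c i * c (m - i))" for m
  have "(RK_matrix a s h L *v u) \<bullet> (H *v (RK_matrix a s h L *v u))
      = (\<Sum>i\<le>s. \<Sum>j\<le>s. c i * c j * ((matpow L i *v u) \<bullet> (H *v (matpow L j *v u))))"
    by (simp add: RK_matrix_mult_vec c_def vec.sum inner_sum_left inner_sum_right
        matrix_vector_mult_scaleR sum_distrib_left mult_ac)
      (subst sum.swap, simp add: mult_ac)
  also have "\<dots> = (\<Sum>i\<le>s. \<Sum>j\<le>s. (-1) ^ i * c i * c j * e (i + j))"
    by (simp add: inner_matpow_skew_adjoint[OF skew] e_def matpow_add mult_ac
        flip: matrix_vector_mul_assoc)
  also have "\<dots> = (\<Sum>m<2 * Suc s. d m * e m)"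
    by (subst sum_square_eq_sum_antidiagonals) (auto simp: c_def d_def sum_distrib_right)
  also have "\<dots> = (\<Sum>m<2 * Suc s. if even m then d m * e m else 0)"
    by (rule sum.cong) (simp_all add: e_def inner_matpow_odd_eq_0[OF skew Hsym])
  also have "\<dots> = (\<Sum>k<Suc s. d (2 * k) * e (2 * k))"
    by (simp only: sum_split_even_odd) simp
  also have "\<dots> = (\<Sum>k\<le>s. bcoef a s k * h ^ (2 * k) * ((matpow L k *v u) \<bullet> (H *v (matpow L k *v u))))"
  proof -
    have "d (2 * k) * (-1) ^ k = bcoef a s k * h ^ (2 * k)" for k
    proof -
      have "d (2 * k) * (-1) ^ k = (\<Sum>i\<le>2 * k. (-1) ^ (k + i) * c i * c (2 * k - i))"
        by (simp add: d_def sum_distrib_left sum_distrib_right power_add mult_ac)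
      also have "\<dots> = (\<Sum>i\<le>2 * k. (-1) ^ (k + i) * (if i \<le> s then a i else 0)
          * (if 2 * k - i \<le> s then a (2 * k - i) else 0)) * h ^ (2 * k)"
        unfolding sum_distrib_right
        by (rule sum.cong) (auto simp: c_def simp flip: power_add)
      finally show ?thesis
        by (simp add: bcoef_eq_sum_atMost)
    qed
    then show ?thesis
      by (simp add: e_def inner_matpow_even[OF skew] lessThan_Suc_atMost mult.assoc[symmetric])
  qed
  finally show ?thesis .
qed

section \<open>The H-norm and its operator norm\<close>

lemma sym_pos_def_inner_nonneg: "sym_pos_def H \<Longrightarrow> 0 \<le> x \<bullet> (H *v x)"
  unfolding sym_pos_def_def by (cases "x = 0") (auto intro: less_imp_le)

lemma Hnorm_power2: "sym_pos_def H \<Longrightarrow> (Hnorm H x)\<^sup>2 = x \<bullet> (H *v x)"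
  by (simp add: Hnorm_def sym_pos_def_inner_nonneg)

lemma Hnorm_scaleR: "Hnorm H (c *\<^sub>R x) = \<bar>c\<bar> * Hnorm H x"
  by (simp add: Hnorm_def matrix_vector_mult_scaleR real_sqrt_mult power2_eq_square
      flip: mult.assoc)

lemma sym_pos_def_inner_ge_norm:
  fixes H :: "real^'n^'n"
  assumes "sym_pos_def H"
  obtains m where "m > 0" "\<And>x. m * (norm x)\<^sup>2 \<le> x \<bullet> (H *v x)"
proof -
  have "sphere (0::real^'n) 1 \<noteq> {}"
    using norm_axis_1 by (metis mem_sphere_0 empty_iff)
  moreover have "continuous_on (sphere 0 1) (\<lambda>x::real^'n. x \<bullet> (H *v x))"
    by (intro continuous_intros linear_continuous_on matrix_vector_mul_bounded_linear)
  ultimately obtain x0 where x0: "x0 \<in> sphere 0 1"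
    and min: "\<And>y. y \<in> sphere 0 1 \<Longrightarrow> x0 \<bullet> (H *v x0) \<le> y \<bullet> (H *v y)"
    using continuous_attains_inf[OF compact_sphere] by blast
  have "x0 \<noteq> 0"
    using x0 by auto
  then have "x0 \<bullet> (H *v x0) > 0"
    using assms unfolding sym_pos_def_def by blast
  moreover have "x0 \<bullet> (H *v x0) * (norm x)\<^sup>2 \<le> x \<bullet> (H *v x)" for x :: "real^'n"
  proof (cases "x = 0")
    case False
    have "x0 \<bullet> (H *v x0) \<le> ((1 / norm x) *\<^sub>R x) \<bullet> (H *v ((1 / norm x) *\<^sub>R x))"
      using False by (intro min) simp
    also have "\<dots> = x \<bullet> (H *v x) / (norm x)\<^sup>2"
      by (simp add: matrix_vector_mult_scaleR power2_eq_square)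
    finally show ?thesis
      using False by (simp add: field_simps)
  qed simp
  ultimately show ?thesis
    using that by blast
qed

lemma inner_mat_le_norm:
  fixes H :: "real^'n^'n"
  obtains K where "K > 0" "\<And>x. x \<bullet> (H *v x) \<le> K * (norm x)\<^sup>2"
proof -
  obtain K where K: "K > 0" "\<And>x. norm (H *v x) \<le> norm x * K"
    using bounded_linear.pos_bounded[OF matrix_vector_mul_bounded_linear[of H]] by blast
  have "x \<bullet> (H *v x) \<le> K * (norm x)\<^sup>2" for x
  proof -
    have "x \<bullet> (H *v x) \<le> norm x * norm (H *v x)"
      by (rule norm_cauchy_schwarz)
    also have "\<dots> \<le> norm x * (norm x * K)"
      using K(2) by (simp add: mult_left_mono)
    finally show ?thesis
      by (simp add: power2_eq_square mult_ac)
  qed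
  then show ?thesis
    using K(1) that by blast
qed

lemma bdd_above_Hnorm_image_unit_sphere:
  fixes H L :: "real^'n^'n"
  assumes H: "sym_pos_def H"
  shows "bdd_above {Hnorm H (L *v v) | v. Hnorm H v = 1}"
proof -
  obtain m where m: "m > 0" "\<And>x. m * (norm x)\<^sup>2 \<le> x \<bullet> (H *v x)"
    using sym_pos_def_inner_ge_norm[OF H] by blast
  obtain K where K: "K > 0" "\<And>x. x \<bullet> (H *v x) \<le> K * (norm x)\<^sup>2"
    using inner_mat_le_norm by blast
  obtain C where C: "C > 0" "\<And>x. norm (L *v x) \<le> norm x * C"
    using bounded_linear.pos_bounded[OF matrix_vector_mul_bounded_linear[of L]] by blast
  have "Hnorm H (L *v v) \<le> sqrt (K * C\<^sup>2 * (1 / m))" if "Hnorm H v = 1" for v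
  proof -
    have "m * (norm v)\<^sup>2 \<le> 1"
      using m(2)[of v] Hnorm_power2[OF H, of v] that by simp
    then have "(norm v)\<^sup>2 \<le> 1 / m"
      using m(1) by (simp add: field_simps)
    have "(L *v v) \<bullet> (H *v (L *v v)) \<le> K * (norm v * C)\<^sup>2"
      using K C(2)[of v] by (meson mult_left_mono norm_ge_zero order_trans power_mono less_imp_le)
    also have "\<dots> = K * C\<^sup>2 * (norm v)\<^sup>2"
      by (simp add: power_mult_distrib)
    also have "\<dots> \<le> K * C\<^sup>2 * (1 / m)"
      using \<open>(norm v)\<^sup>2 \<le> 1 / m\<close> K(1) by (intro mult_left_mono) simp_all
    finally show ?thesis
      unfolding Hnorm_def by (rule real_sqrt_le_mono)
  qed
  then show ?thesis
    unfolding bdd_above_def by blast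
qed

lemma Hnorm_mult_le_Hopnorm:
  fixes H L :: "real^'n^'n"
  assumes H: "sym_pos_def H"
  shows "Hnorm H (L *v x) \<le> Hopnorm H L * Hnorm H x"
proof (cases "x = 0")
  case True
  then show ?thesis by (simp add: Hnorm_def)
next
  case False
  define n where "n = Hnorm H x"
  have "n > 0"
    using H False unfolding n_def Hnorm_def sym_pos_def_def by simp
  then have "Hnorm H ((1 / n) *\<^sub>R x) = 1"
    by (simp add: Hnorm_scaleR n_def)
  then have "Hnorm H (L *v ((1 / n) *\<^sub>R x)) \<le> Hopnorm H L"
    unfolding Hopnorm_def by (intro cSup_upper bdd_above_Hnorm_image_unit_sphere H) blast
  then show ?thesis
    using \<open>n > 0\<close>
    by (simp add: matrix_vector_mult_scaleR Hnorm_scaleR field_simps flip: n_def)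
qed

section \<open>The coefficients b_k\<close>

lemma bcoef_0: "bcoef a s 0 = (a 0)\<^sup>2"
  by (simp add: bcoef_def power2_eq_square)

lemma bcoef_self: "bcoef a s s = (a s)\<^sup>2"
  by (simp add: bcoef_def power2_eq_square mult_2)

lemma bcoef_pred:
  assumes "2 \<le> s"
  shows "bcoef a s (s - 1) = (a (s - 1))\<^sup>2 - 2 * a s * a (s - 2)"
proof -
  obtain t where t: "s = Suc (Suc t)"
    using assms by (metis add_2_eq_Suc le_Suc_ex)
  have "{t..Suc (Suc t)} = {t, Suc t, Suc (Suc t)}"
    by auto
  then show ?thesis
    using t by (simp add: bcoef_def power2_eq_square algebra_simps)
qed

lemma bcoef_1_eq_0:
  assumes "2 \<le> s" "a 0 = 1" "a 1 = 1" "a 2 = 1 / 2"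
  shows "bcoef a s 1 = 0"
proof -
  have "{0..2::nat} = {0, 1, 2}"
    by auto
  then show ?thesis
    using assms by (simp add: bcoef_def)
qed

lemma bcoef_2_eq_0:
  assumes "4 \<le> s" "a 0 = 1" "a 1 = 1" "a 2 = 1 / 2" "a 3 = 1 / 6" "a 4 = 1 / 24"
  shows "bcoef a s 2 = 0"
proof -
  have "{0..4::nat} = {0, 1, 2, 3, 4}"
    by auto
  then show ?thesis
    using assms(3) by (simp add: bcoef_def assms)
qed

lemma leading_index_eqI:
  assumes "1 \<le> m" "bcoef a s m \<noteq> 0" "\<And>k. 1 \<le> k \<Longrightarrow> k < m \<Longrightarrow> bcoef a s k = 0"
  shows "leading_index a s = m"
  unfolding leading_index_def
  by (rule Least_equality) (use assms in \<open>auto intro: leI\<close>)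

section \<open>Energy order and strong stability\<close>

lemma RK_energy_identity_sparse:
  fixes H L :: "real^'n^'n"
  assumes skew: "transpose L ** H + H ** L = 0" and Hsym: "transpose H = H"
    and "2 \<le> s" "a 0 = 1"
    and bzero: "\<And>k. 1 \<le> k \<Longrightarrow> k \<le> s - 2 \<Longrightarrow> bcoef a s k = 0"
  shows "(RK_matrix a s h L *v u) \<bullet> (H *v (RK_matrix a s h L *v u)) = u \<bullet> (H *v u)
    + bcoef a s (s - 1) * h ^ (2 * (s - 1))
      * ((matpow L (s - 1) *v u) \<bullet> (H *v (matpow L (s - 1) *v u)))
    + (a s)\<^sup>2 * h ^ (2 * s) * ((matpow L s *v u) \<bullet> (H *v (matpow L s *v u)))"
proof -
  let ?term = "\<lambda>k. bcoef a s k * h ^ (2 * k) * ((matpow L k *v u) \<bullet> (H *v (matpow L k *v u)))"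
  have "(\<Sum>k\<le>s. ?term k) = (\<Sum>k\<in>{0, s - 1, s}. ?term k)"
    by (rule sum.mono_neutral_right) (use bzero in auto)
  then show ?thesis
    using assms(3,4) by (simp add: RK_energy_identity[OF skew Hsym] bcoef_0 bcoef_self)
qed

lemma RK_strongly_stable:
  fixes H L :: "real^'n^'n"
  assumes H: "sym_pos_def H" and skew: "transpose L ** H + H ** L = 0"
    and s: "2 \<le> s" and a0: "a 0 = 1"
    and bzero: "\<And>k. 1 \<le> k \<Longrightarrow> k \<le> s - 2 \<Longrightarrow> bcoef a s k = 0"
    and bneg: "bcoef a s (s - 1) < 0"
    and h: "0 \<le> h"
    and step: "h * Hopnorm H L \<le> sqrt (- bcoef a s (s - 1) / (a s)\<^sup>2)"
  shows "Hnorm H (RK_matrix a s h L *v u) \<le> Hnorm H u"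
proof -
  define \<beta> where "\<beta> = - bcoef a s (s - 1)"
  define x where "x = matpow L (s - 1) *v u"
  define q where "q y = y \<bullet> (H *v y)" for y
  have Hsym: "transpose H = H"
    using H by (simp add: sym_pos_def_def)
  have Lx: "matpow L s *v u = L *v x"
    using s by (simp add: x_def matrix_vector_mul_assoc flip: matpow.simps(2))
  have "0 < \<beta>"
    using bneg by (simp add: \<beta>_def)
  then have "0 \<le> \<beta> / (a s)\<^sup>2"
    by simp
  have q_nonneg: "0 \<le> q y" for y
    by (simp add: q_def sym_pos_def_inner_nonneg[OF H])
  have "h * Hnorm H (L *v x) \<le> h * Hopnorm H L * Hnorm H x"
    using Hnorm_mult_le_Hopnorm[OF H, of L x] h by (simp add: mult_left_mono mult.assoc)
  also have "\<dots> \<le> sqrt (\<beta> / (a s)\<^sup>2) * Hnorm H x"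
    using step q_nonneg[of x] by (intro mult_right_mono) (simp_all add: \<beta>_def Hnorm_def q_def)
  finally have "(h * Hnorm H (L *v x))\<^sup>2 \<le> (sqrt (\<beta> / (a s)\<^sup>2) * Hnorm H x)\<^sup>2"
    using h q_nonneg[of "L *v x"] by (intro power_mono) (simp_all add: Hnorm_def q_def)
  then have "h\<^sup>2 * q (L *v x) \<le> \<beta> / (a s)\<^sup>2 * q x"
    using \<open>0 \<le> \<beta> / (a s)\<^sup>2\<close> by (simp add: power_mult_distrib Hnorm_power2[OF H] q_def)
  then have "(a s)\<^sup>2 * (h\<^sup>2 * q (L *v x)) \<le> (a s)\<^sup>2 * (\<beta> / (a s)\<^sup>2 * q x)"
    by (rule mult_left_mono) simp
  also have "\<dots> \<le> \<beta> * q x"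
    using \<open>0 < \<beta>\<close> q_nonneg[of x] by (cases "a s = 0") simp_all
  finally have "h ^ (2 * (s - 1)) * ((a s)\<^sup>2 * (h\<^sup>2 * q (L *v x)))
      \<le> h ^ (2 * (s - 1)) * (\<beta> * q x)"
    using h by (simp add: mult_left_mono)
  moreover have "h ^ (2 * s) = h ^ (2 * (s - 1)) * h\<^sup>2"
  proof -
    have "2 * s = 2 * (s - 1) + 2"
      using s by simp
    then show ?thesis
      by (metis power_add)
  qed
  ultimately have "(a s)\<^sup>2 * h ^ (2 * s) * q (L *v x) \<le> \<beta> * h ^ (2 * (s - 1)) * q x"
    by (simp add: mult_ac)
  then have "q (RK_matrix a s h L *v u) \<le> q u"
    using RK_energy_identity_sparse[OF skew Hsym s a0 bzero, of h u]
    by (simp add: q_def x_def Lx \<beta>_def)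
  then show ?thesis
    unfolding Hnorm_def q_def by (rule real_sqrt_le_mono)
qed

theorem theorem1:
  fixes H L :: "real^'n^'n" and a :: "nat \<Rightarrow> real" and s :: nat and h :: real
  assumes H: "sym_pos_def H"
    and skew: "transpose L ** H + H ** L = 0"
    and s4: "s \<ge> 4"
    and a0: "a 0 = 1"
    and as: "a s \<noteq> 0"
    and hpos: "h > 0"
    and order4: "\<forall>k\<in>{1..4}. a k = 1 / fact k"
    and bzero: "\<forall>k. 3 \<le> k \<and> k \<le> s - 2 \<longrightarrow> bcoef a s k = 0"
    and bneg: "bcoef a s (s - 1) < 0"
  shows "energy_order a s = 2 * s - 3 \<and>
    (h * Hopnorm H L \<le> sqrt ((2 * a s * a (s - 2) - (a (s - 1))\<^sup>2) / (a s)\<^sup>2) \<longrightarrow>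
      (\<forall>u. Hnorm H (RK_matrix a s h L *v u) \<le> Hnorm H u))"
proof -
  have taylor: "a 1 = 1" "a 2 = 1 / 2" "a 3 = 1 / 6" "a 4 = 1 / 24"
    using order4 by (auto simp: fact_numeral)
  have bzero': "bcoef a s k = 0" if "1 \<le> k" "k \<le> s - 2" for k
    using that bzero bcoef_1_eq_0[OF _ a0 taylor(1,2)] bcoef_2_eq_0[OF s4 a0 taylor] s4
    by (cases "k \<le> 2") (auto simp: le_Suc_eq numeral_2_eq_2)
  have "leading_index a s = s - 1"
    using s4 bneg bzero' by (intro leading_index_eqI) auto
  then have "energy_order a s = 2 * s - 3"
    using s4 by (simp add: energy_order_def)
  moreover have "2 * a s * a (s - 2) - (a (s - 1))\<^sup>2 = - bcoef a s (s - 1)"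
    using bcoef_pred[of s a] s4 by simp
  ultimately show ?thesis
    using RK_strongly_stable[OF H skew _ a0 bzero' bneg] s4 hpos by auto
qed

end
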